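(* Define a sequence of permutations $(a_i)_{i\ge 1}$ as follows. Let $$a_1 = 13\;12\;10\;14\;8\;11\;6\;9\;4\;7\;3\;2\;1\;5,$$ a permutation of $\{1,\dots,14\}$ in one-line notation. Given $a_i$, a permutation of $\{1,\dots,n\}$ whose maximum entry is $m=n$, obtain $a_{i+1}$ by: increasing by $2$ every entry of $a_i$ that is weakly to the left of the position of $m$ (including $m$ itself), leaving all entries to the right of $m$ unchanged, and inserting immediately after the (now incremented) maximum entry two new consecutive entries with values $m-4$ and $m-1$, in this order. (For example, $a_2 = 15\;14\;12\;16\;10\;13\;8\;11\;6\;9\;4\;7\;3\;2\;1\;5$.) Then each $a_i$ is a permutation of $\{1,\dots,2i+12\}$, and for all $i\neq j$ the permutations $a_i$ and $a_j$ are incomparable in the pattern-containment order. Consequently, the partially ordered set of all finite permutations ordered by pattern containment contains an infinite antichain, namely $\{a_i : i\ge 1\}$.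
   Context: A permutation of $\{1,\dots,n\}$ is written in one-line notation as the sequence $p(1)\,p(2)\cdots p(n)$. For a permutation $p_1$ of $\{1,\dots,m\}$ and a permutation $p_2$ of $\{1,\dots,n\}$ with $m\le n$, we say $p_1 \le p_2$ ($p_1$ is contained in $p_2$) if one can delete $n-m$ entries from the sequence $p_2$ so that, after renaming the remaining $m$ entries by their relative rank (the smallest becomes $1$, the next $2$, etc.), one obtains exactly $p_1$; equivalently, there are positions $k_1<\dots<k_m$ with $p_2(k_s)<p_2(k_t)$ if and only if $p_1(s)<p_1(t)$. This makes the set of all finite permutations a partially ordered set. An antichain is a set of pairwise incomparable elements. *)

theory Defs
  imports Main
begin

text \<open>Permutations of {1..n} in one-line notation, represented as lists
  (entry at list index k is p(k+1)).\<close>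
definition is_perm :: "nat \<Rightarrow> nat list \<Rightarrow> bool" where
  "is_perm n p \<longleftrightarrow> length p = n \<and> distinct p \<and> set p = {1..n}"

definition all_perms :: "nat list set" where
  "all_perms = {p. \<exists>n. is_perm n p}"

definition contained :: "nat list \<Rightarrow> nat list \<Rightarrow> bool" where
  "contained p1 p2 \<longleftrightarrow> length p1 \<le> length p2 \<and>
     (\<exists>ks :: nat list. length ks = length p1 \<and> sorted_wrt (<) ks \<and>
        (\<forall>k\<in>set ks. k < length p2) \<and>
        (\<forall>s<length p1. \<forall>t<length p1. (p2 ! (ks ! s) < p2 ! (ks ! t)) \<longleftrightarrow> (p1 ! s < p1 ! t)))"

definition antichain_in :: "nat list set \<Rightarrow> nat list set \<Rightarrow> bool" where
  "antichain_in U A \<longleftrightarrow> A \<subseteq> U \<and> (\<forall>x\<in>A. \<forall>y\<in>A. x \<noteq> y \<longrightarrow> \<not> contained x y)"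

definition step :: "nat list \<Rightarrow> nat list" where
  "step p = (let m = Max (set p); k = length (takeWhile (\<lambda>x. x \<noteq> m) p)
             in map (\<lambda>x. x + 2) (take (Suc k) p) @ [m - 4, m - 1] @ drop (Suc k) p)"

definition a1 :: "nat list" where
  "a1 = [13, 12, 10, 14, 8, 11, 6, 9, 4, 7, 3, 2, 1, 5]"

primrec a_aux :: "nat \<Rightarrow> nat list" where
  "a_aux 0 = a1"
| "a_aux (Suc i) = step (a_aux i)"

definition a :: "nat \<Rightarrow> nat list" where
  "a i = a_aux (i - 1)"

end

theory Submission
  imports Defs
begin

(* Join two positions of a permutation when their entries form an increasing pair.  For a_i of
   length n (positions counted from 0) this graph is a path of length n - 6 from position 3, which
   holds the maximum, to position n - 1, with two extra leaves at position 3 and three at position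
   n - 1; every other position has degree at most 2.  A pattern occurrence of a_i in a_j is an
   order-preserving injection of positions that preserves adjacency, so it cannot decrease degrees.
   It therefore sends the two branch vertices of a_i to those of a_j, and the path between them to
   a walk of length n - 6 between vertices at distance n_j - 6, which is impossible if n < n_j. *)

definition incr_adj :: "nat list \<Rightarrow> nat \<Rightarrow> nat \<Rightarrow> bool" where
  "incr_adj p x y \<longleftrightarrow> (x < y \<and> p ! x < p ! y) \<or> (y < x \<and> p ! y < p ! x)"

definition incr_nbrs :: "nat list \<Rightarrow> nat \<Rightarrow> nat set" where
  "incr_nbrs p x = {y. y < length p \<and> incr_adj p x y}"

definition incr_embedding :: "nat list \<Rightarrow> nat list \<Rightarrow> (nat \<Rightarrow> nat) \<Rightarrow> bool" where
  "incr_embedding p q f \<longleftrightarrow>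
     f ` {..<length p} \<subseteq> {..<length q} \<and> strict_mono_on {..<length p} f \<and>
     (\<forall>x<length p. \<forall>y<length p. incr_adj p x y \<longrightarrow> incr_adj q (f x) (f y))"

lemma contained_imp_incr_embedding:
  assumes "contained p q"
  shows "\<exists>f. incr_embedding p q f"
proof -
  from assms obtain ks where len: "length ks = length p" and sorted: "sorted_wrt (<) ks"
    and bound: "\<forall>k\<in>set ks. k < length q"
    and ord: "\<forall>s<length p. \<forall>t<length p. q ! (ks ! s) < q ! (ks ! t) \<longleftrightarrow> p ! s < p ! t"
    unfolding contained_def by blast
  have mono: "strict_mono_on {..<length p} ((!) ks)"
    by (rule strict_mono_onI) (use sorted_wrt_nth_less[OF sorted] len in auto)
  have "(!) ks ` {..<length p} \<subseteq> {..<length q}"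
    using bound len by auto
  moreover have "incr_adj q (ks ! x) (ks ! y)"
    if "x < length p" "y < length p" "incr_adj p x y" for x y
    using that ord strict_mono_onD[OF mono] unfolding incr_adj_def by auto
  ultimately show ?thesis unfolding incr_embedding_def using mono by blast
qed

lemma card_incr_nbrs_le:
  assumes f: "incr_embedding p q f" and x: "x < length p"
  shows "card (incr_nbrs p x) \<le> card (incr_nbrs q (f x))"
proof (rule card_inj_on_le)
  have "inj_on f {..<length p}"
    using f strict_mono_on_imp_inj_on unfolding incr_embedding_def by blast
  then show "inj_on f (incr_nbrs p x)"
    by (rule inj_on_subset) (auto simp: incr_nbrs_def)
  show "f ` incr_nbrs p x \<subseteq> incr_nbrs q (f x)"
    using f x unfolding incr_embedding_def incr_nbrs_def by auto
  show "finite (incr_nbrs q (f x))"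
    unfolding incr_nbrs_def by simp
qed

lemma potential_along_walk:
  fixes \<phi> :: "'a \<Rightarrow> nat"
  assumes walk: "\<And>t. t < m \<Longrightarrow> R (v t) (v (Suc t))"
    and lipschitz: "\<And>x y. R x y \<Longrightarrow> \<phi> y \<le> \<phi> x + 1"
  shows "\<phi> (v m) \<le> \<phi> (v 0) + m"
  using walk
proof (induction m)
  case 0
  show ?case by simp
next
  case (Suc m)
  then have "\<phi> (v m) \<le> \<phi> (v 0) + m" by simp
  moreover have "\<phi> (v (Suc m)) \<le> \<phi> (v m) + 1" using Suc.prems lipschitz by blast
  ultimately show ?case by simp
qed

lemma is_perm_map_upt:
  assumes "inj_on f {0..<n}" "f ` {0..<n} \<subseteq> {1..n}"
  shows "is_perm n (map f [0..<n])"
proof -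
  have "card (f ` {0..<n}) = card {1..n}" using card_image[OF assms(1)] by simp
  then have "f ` {0..<n} = {1..n}" using card_subset_eq[OF finite_atLeastAtMost assms(2)] by simp
  then show ?thesis unfolding is_perm_def using assms(1) by (simp add: distinct_map)
qed

(* Entry at position s (counted from 0) of a_aux k, where n = 2k + 14. *)
definition a_entry :: "nat \<Rightarrow> nat \<Rightarrow> nat" where
  "a_entry n s =
    (if s = 0 then n - 1 else if s = 1 then n - 2 else if s = 2 then n - 4 else if s = 3 then n
     else if s = n - 4 then 3 else if s = n - 3 then 2 else if s = n - 2 then 1
     else if s = n - 1 then 5
     else if even s then n - s - 2 else n + 2 - s)"

lemma a_entry_cases:
  assumes "s < 2*k + 14"
  shows "(s = 0 \<and> a_entry (2*k + 14) s = 2*k + 13) \<or> (s = 1 \<and> a_entry (2*k + 14) s = 2*k + 12)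
    \<or> (s = 2 \<and> a_entry (2*k + 14) s = 2*k + 10) \<or> (s = 3 \<and> a_entry (2*k + 14) s = 2*k + 14)
    \<or> (s = 2*k + 10 \<and> a_entry (2*k + 14) s = 3) \<or> (s = 2*k + 11 \<and> a_entry (2*k + 14) s = 2)
    \<or> (s = 2*k + 12 \<and> a_entry (2*k + 14) s = 1) \<or> (s = 2*k + 13 \<and> a_entry (2*k + 14) s = 5)
    \<or> (\<exists>b \<le> k + 2. s = 2*b + 4 \<and> a_entry (2*k + 14) s = 2*k + 8 - 2*b)
    \<or> (\<exists>b \<le> k + 2. s = 2*b + 5 \<and> a_entry (2*k + 14) s = 2*k + 11 - 2*b)"
proof -
  have "s \<le> 3 \<or> 2*k + 10 \<le> s \<or> (\<exists>b \<le> k + 2. s = 2*b + 4 \<or> s = 2*b + 5)"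
    using assms by presburger
  moreover have "s \<le> 3 \<Longrightarrow> s = 0 \<or> s = 1 \<or> s = 2 \<or> s = 3" by auto
  moreover have "2*k + 10 \<le> s \<Longrightarrow> s = 2*k + 10 \<or> s = 2*k + 11 \<or> s = 2*k + 12 \<or> s = 2*k + 13"
    using assms by auto
  ultimately show ?thesis
    unfolding a_entry_def by (elim disjE exE conjE) auto
qed

lemma a_entry_middle:
  assumes "4 \<le> s" "s + 4 < n"
  shows "a_entry n s = (if even s then n - s - 2 else n + 2 - s)"
proof -
  have "s \<noteq> n - 4" "s \<noteq> n - 3" "s \<noteq> n - 2" "s \<noteq> n - 1" using assms(2) by linarith+
  then show ?thesis using assms(1) unfolding a_entry_def by simp
qed

lemma a_entry_shift:
  assumes "4 \<le> s" "s < n"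
  shows "a_entry (n + 2) (s + 2) = a_entry n s"
proof -
  consider "s + 4 < n" | "n = s + 4" | "n = s + 3" | "n = s + 2" | "n = s + 1"
    using assms(2) by linarith
  then show ?thesis
  proof cases
    case 1
    then show ?thesis using assms(1) a_entry_middle[of s n] a_entry_middle[of "s + 2" "n + 2"] by simp
  qed (use assms(1) in \<open>auto simp: a_entry_def\<close>)
qed

lemma a_entry_neq:
  assumes "x < y" "y < 2*k + 14"
  shows "a_entry (2*k + 14) x \<noteq> a_entry (2*k + 14) y"
  using a_entry_cases[OF less_trans[OF assms]] a_entry_cases[OF assms(2)] assms(1)
  by (elim disjE exE conjE) (simp_all, presburger+)

lemma a_entry_range: "s < 2*k + 14 \<Longrightarrow> a_entry (2*k + 14) s \<in> {1..2*k + 14}"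
  using a_entry_cases[of s k] by auto

lemma is_perm_a_entry: "is_perm (2*k + 14) (map (a_entry (2*k + 14)) [0..<2*k + 14])"
proof (rule is_perm_map_upt)
  show "inj_on (a_entry (2*k + 14)) {0..<2*k + 14}"
    by (rule linorder_inj_onI') (use a_entry_neq in auto)
  show "a_entry (2*k + 14) ` {0..<2*k + 14} \<subseteq> {1..2*k + 14}"
    using a_entry_range by auto
qed

lemma map_a_entry_upt:
  assumes "4 \<le> n"
  shows "map (a_entry n) [0..<n] = [n - 1, n - 2, n - 4, n] @ map (a_entry n) [4..<n]"
proof -
  have "[0..<4] = [0, 1, 2, 3::nat]" by (simp add: upt_rec)
  then have "[0..<n] = [0, 1, 2, 3] @ [4..<n]"
    using upt_add_eq_append[of 0 4 "n - 4"] assms by simp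
  then show ?thesis by (simp add: a_entry_def)
qed

lemma step_a_entry:
  "step (map (a_entry (2*k + 14)) [0..<2*k + 14]) = map (a_entry (2*k + 16)) [0..<2*k + 16]"
proof -
  define n where "n = 2*k + 14"
  define p where "p = map (a_entry n) [0..<n]"
  have "set p = {1..n}" using is_perm_a_entry[of k] unfolding is_perm_def p_def n_def by simp
  then have max: "Max (set p) = n" by (auto intro: Max_eqI simp: n_def)
  have p: "p = [n - 1, n - 2, n - 4, n] @ map (a_entry n) [4..<n]"
    unfolding p_def using map_a_entry_upt[of n] by (simp add: n_def)
  have "takeWhile (\<lambda>x. x \<noteq> n) p = [n - 1, n - 2, n - 4]" unfolding p by (simp add: n_def)
  then have "step p = [n + 1, n, n - 2, n + 2, n - 4, n - 1] @ map (a_entry n) [4..<n]"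
    unfolding step_def Let_def max by (simp add: p n_def)
  also have "map (a_entry n) [4..<n] = map (\<lambda>s. a_entry (n + 2) (s + 2)) [4..<n]"
    by (rule map_cong, simp, rule a_entry_shift[symmetric]) auto
  also have "\<dots> = map (a_entry (n + 2)) [6..<n + 2]"
    by (rule nth_equalityI) (simp_all del: upt_Suc)
  also have "[n + 1, n, n - 2, n + 2, n - 4, n - 1] = map (a_entry (n + 2)) [0..<6]"
    by (simp add: upt_rec a_entry_def n_def)
  also have "map (a_entry (n + 2)) [0..<6] @ map (a_entry (n + 2)) [6..<n + 2]
      = map (a_entry (n + 2)) [0..<n + 2]"
    using upt_add_eq_append[of 0 6 "n - 4"] by (simp add: n_def flip: map_append)
  finally show ?thesis by (simp add: p_def n_def add.commute)
qed

lemma a_aux_eq: "a_aux k = map (a_entry (2*k + 14)) [0..<2*k + 14]"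
proof (induction k)
  case 0
  show ?case by (simp add: a1_def a_entry_def upt_rec)
next
  case (Suc k)
  then show ?case using step_a_entry[of k] by (simp add: add.commute)
qed

lemma length_a_aux: "length (a_aux k) = 2*k + 14"
  by (simp add: a_aux_eq)

(* The increasing pairs x < y of positions of a_aux k, where n = 2k + 14: the path
   3, 2, 5, 4, 7, 6, ..., n - 5, n - 6, n - 1 (enumerated by fork_path) together with the leaves
   0, 1 at position 3 and n - 4, n - 3, n - 2 at position n - 1. *)
definition fork_edge :: "nat \<Rightarrow> nat \<Rightarrow> nat \<Rightarrow> bool" where
  "fork_edge n x y \<longleftrightarrow>
     (x \<le> 2 \<and> y = 3)
   \<or> (even x \<and> 2 \<le> x \<and> x + 8 \<le> n \<and> y = x + 3)
   \<or> (even x \<and> 4 \<le> x \<and> x + 6 \<le> n \<and> y = x + 1)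
   \<or> (x + 6 = n \<and> y + 1 = n)
   \<or> (n \<le> x + 4 \<and> x + 2 \<le> n \<and> y + 1 = n)"

lemma fork_edge_less: "fork_edge n x y \<Longrightarrow> x < y"
  unfolding fork_edge_def by auto

lemma a_entry_less_iff:
  assumes "x < y" "y < 2*k + 14"
  shows "a_entry (2*k + 14) x < a_entry (2*k + 14) y \<longleftrightarrow> fork_edge (2*k + 14) x y"
  using a_entry_cases[OF less_trans[OF assms]] a_entry_cases[OF assms(2)] assms(1)
  unfolding fork_edge_def by (elim disjE exE conjE) (simp_all, presburger+)

lemma incr_adj_a_aux:
  assumes n: "n = 2*k + 14" and "x < n" "y < n"
  shows "incr_adj (a_aux k) x y \<longleftrightarrow> fork_edge n x y \<or> fork_edge n y x"
  using assms a_entry_less_iff[of x y k] a_entry_less_iff[of y x k] fork_edge_less[of n x y]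
    fork_edge_less[of n y x]
  unfolding incr_adj_def a_aux_eq by auto

lemma incr_nbrs_a_aux:
  assumes n: "n = 2*k + 14" and "x < n"
  shows "incr_nbrs (a_aux k) x = {y. y < n \<and> (fork_edge n x y \<or> fork_edge n y x)}"
  using assms incr_adj_a_aux[OF n] unfolding incr_nbrs_def length_a_aux by auto

lemma incr_nbrs_a_aux_max: "incr_nbrs (a_aux k) 3 = {0, 1, 2}"
  by (auto simp: incr_nbrs_a_aux[OF refl] fork_edge_def)

lemma incr_nbrs_a_aux_last:
  assumes n: "n = 2*k + 14"
  shows "incr_nbrs (a_aux k) (n - 1) = {n - 6, n - 4, n - 3, n - 2}"
  using n by (auto simp: incr_nbrs_a_aux[OF n] fork_edge_def)

lemma card_incr_nbrs_a_aux_le_2: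
  assumes n: "n = 2*k + 14" and x: "x < n" "x \<noteq> 3" "x \<noteq> n - 1"
  shows "card (incr_nbrs (a_aux k) x) \<le> 2"
proof -
  define u where "u = (if x \<le> 2 then 3 else if n \<le> x + 4 then n - 1
    else if even x then x + 1 else x - 1)"
  define v where "v = (if x = 2 then 5 else if x \<le> 1 then 3 else if n \<le> x + 4 \<or> x + 6 = n then n - 1
    else if even x then x + 3 else x - 3)"
  have "incr_nbrs (a_aux k) x \<subseteq> {u, v}"
    using x unfolding incr_nbrs_a_aux[OF n x(1)] u_def v_def fork_edge_def n by (auto; presburger)
  then have "card (incr_nbrs (a_aux k) x) \<le> card {u, v}"
    by (rule card_mono[rotated]) simp
  also have "\<dots> \<le> 2"
    by (simp add: card_insert_if)
  finally show ?thesis .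
qed

lemma a_aux_branch_vertex:
  assumes n: "n = 2*k + 14" and x: "x < n" and deg: "3 \<le> card (incr_nbrs (a_aux k) x)"
  shows "x = 3 \<or> x = n - 1"
  using card_incr_nbrs_a_aux_le_2[OF n x] deg by fastforce

lemma a_aux_degree_4_vertex:
  assumes n: "n = 2*k + 14" and x: "x < n" and deg: "4 \<le> card (incr_nbrs (a_aux k) x)"
  shows "x = n - 1"
  using a_aux_branch_vertex[OF n x] deg incr_nbrs_a_aux_max by fastforce

(* The graph distance from position 3. *)
definition fork_dist :: "nat \<Rightarrow> nat \<Rightarrow> nat" where
  "fork_dist n x = (if x \<le> 2 then 1 else if x = 3 then 0 else if x + 1 = n then n - 6
     else if n \<le> x + 4 then n - 5 else if even x then x - 1 else x - 3)"

lemma fork_dist_edge: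
  assumes "n = 2*k + 14" "fork_edge n x y" "y < n"
  shows "fork_dist n y \<le> fork_dist n x + 1 \<and> fork_dist n x \<le> fork_dist n y + 1"
  using assms unfolding fork_edge_def fork_dist_def
  by (elim disjE conjE) (simp_all, presburger)

lemma fork_dist_incr_adj:
  assumes n: "n = 2*k + 14" and "x < n" "y < n" "incr_adj (a_aux k) x y"
  shows "fork_dist n y \<le> fork_dist n x + 1"
  using assms fork_dist_edge[OF n, of x y] fork_dist_edge[OF n, of y x]
  unfolding incr_adj_a_aux[OF assms(1-3)] by auto

definition fork_path :: "nat \<Rightarrow> nat \<Rightarrow> nat" where
  "fork_path n t = (if t = 0 then 3 else if t = 1 then 2 else if t + 6 = n then n - 1
     else if even t then t + 3 else t + 1)"

lemma fork_path_less: "n = 2*k + 14 \<Longrightarrow> t + 6 \<le> n \<Longrightarrow> fork_path n t < n"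
  unfolding fork_path_def by auto

lemma fork_path_incr_adj:
  assumes n: "n = 2*k + 14" and t: "t + 6 < n"
  shows "incr_adj (a_aux k) (fork_path n t) (fork_path n (Suc t))"
proof -
  have "t = 0 \<or> t = 1 \<or> t + 7 = n \<or> (\<exists>b. t = 2*b + 2 \<and> t + 7 < n) \<or> (\<exists>b. t = 2*b + 3 \<and> t + 7 < n)"
    using n t by presburger
  then have "fork_edge n (fork_path n t) (fork_path n (Suc t)) \<or> fork_edge n (fork_path n (Suc t)) (fork_path n t)"
    using n unfolding fork_path_def fork_edge_def by (elim disjE exE conjE) (simp_all, presburger)
  moreover have "fork_path n t < n" "fork_path n (Suc t) < n"
    using fork_path_less[OF n] t by auto
  ultimately show ?thesis using incr_adj_a_aux[OF n] by blast
qed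

lemma incr_embedding_a_aux_branch_vertices:
  assumes f: "incr_embedding (a_aux k) (a_aux k') f"
    and n: "n = 2*k + 14" and n': "n' = 2*k' + 14"
  shows "f 3 = 3" and "f (n - 1) = n' - 1"
proof -
  have f_less: "f x < n'" if "x < n" for x
    using f that unfolding incr_embedding_def length_a_aux n n' by auto
  have "4 \<le> card (incr_nbrs (a_aux k') (f (n - 1)))"
    using card_incr_nbrs_le[OF f, of "n - 1"] incr_nbrs_a_aux_last[OF n]
    by (simp add: length_a_aux n)
  then show last: "f (n - 1) = n' - 1"
    using a_aux_degree_4_vertex[OF n' f_less] n by simp
  have "3 \<le> card (incr_nbrs (a_aux k') (f 3))"
    using card_incr_nbrs_le[OF f, of 3] incr_nbrs_a_aux_max by (simp add: length_a_aux)
  then have "f 3 = 3 \<or> f 3 = n' - 1"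
    using a_aux_branch_vertex[OF n' f_less] n by simp
  moreover have "f 3 < f (n - 1)"
    using f strict_mono_onD unfolding incr_embedding_def length_a_aux n by fastforce
  ultimately show "f 3 = 3" using last by simp
qed

lemma not_contained_a_aux:
  assumes "k < k'"
  shows "\<not> contained (a_aux k) (a_aux k')"
proof
  define n n' where "n = 2*k + 14" and "n' = 2*k' + 14"
  assume "contained (a_aux k) (a_aux k')"
  then obtain f where f: "incr_embedding (a_aux k) (a_aux k') f"
    using contained_imp_incr_embedding by blast
  then have f_less: "f x < n'" if "x < n" for x
    using that unfolding incr_embedding_def length_a_aux n_def n'_def by auto
  have f_adj: "incr_adj (a_aux k') (f x) (f y)" if "x < n" "y < n" "incr_adj (a_aux k) x y" for x y
    using f that unfolding incr_embedding_def length_a_aux n_def by blast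
  have "fork_dist n' (f (fork_path n (n - 6))) \<le> fork_dist n' (f (fork_path n 0)) + (n - 6)"
  proof (rule potential_along_walk[where v = "\<lambda>t. f (fork_path n t)"
        and R = "\<lambda>x y. x < n' \<and> y < n' \<and> incr_adj (a_aux k') x y"])
    fix t assume "t < n - 6"
    then show "f (fork_path n t) < n' \<and> f (fork_path n (Suc t)) < n'
        \<and> incr_adj (a_aux k') (f (fork_path n t)) (f (fork_path n (Suc t)))"
      using f_less f_adj fork_path_less[OF n_def] fork_path_incr_adj[OF n_def] by simp
  qed (use fork_dist_incr_adj[OF n'_def] in blast)
  moreover have "fork_path n 0 = 3" "fork_path n (n - 6) = n - 1"
    by (simp_all add: fork_path_def n_def)
  moreover have "fork_dist n' 3 = 0" "fork_dist n' (n' - 1) = n' - 6"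
    by (simp_all add: fork_dist_def n'_def)
  ultimately show False
    using incr_embedding_a_aux_branch_vertices[OF f n_def n'_def] assms by (simp add: n_def n'_def)
qed

lemma is_perm_a: "1 \<le> i \<Longrightarrow> is_perm (2*i + 12) (a i)"
  using is_perm_a_entry[of "i - 1"] by (simp add: a_def a_aux_eq algebra_simps)

lemma length_a: "1 \<le> i \<Longrightarrow> length (a i) = 2*i + 12"
  using is_perm_a unfolding is_perm_def by blast

lemma not_contained_a:
  assumes "1 \<le> i" "1 \<le> j" "i \<noteq> j"
  shows "\<not> contained (a i) (a j)"
proof (cases "i < j")
  case True
  then show ?thesis using assms not_contained_a_aux[of "i - 1" "j - 1"] by (simp add: a_def)
next
  case False
  then have "length (a j) < length (a i)" using assms length_a by simp
  then show ?thesis unfolding contained_def by simp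
qed

theorem mainTheorem1:
  shows "(\<forall>i\<ge>1. is_perm (2 * i + 12) (a i))
       \<and> (\<forall>i j. 1 \<le> i \<longrightarrow> 1 \<le> j \<longrightarrow> i \<noteq> j \<longrightarrow> \<not> contained (a i) (a j))
       \<and> infinite {a i | i. i \<ge> 1}
       \<and> antichain_in all_perms {a i | i. i \<ge> 1}"
proof (intro conjI)
  show "\<forall>i\<ge>1. is_perm (2 * i + 12) (a i)" using is_perm_a by blast
  show "\<forall>i j. 1 \<le> i \<longrightarrow> 1 \<le> j \<longrightarrow> i \<noteq> j \<longrightarrow> \<not> contained (a i) (a j)"
    using not_contained_a by blast
  have "inj_on a {1..}"
  proof (rule inj_onI)
    fix i j assume "i \<in> {1..}" "j \<in> {1..}" "a i = a j"
    then have "2*i + 12 = 2*j + 12" using length_a by (metis atLeast_iff)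
    then show "i = j" by simp
  qed
  then have "infinite (a ` {1..})"
    using finite_imageD infinite_Ici by blast
  moreover have "{a i | i. i \<ge> 1} = a ` {1..}" by auto
  ultimately show "infinite {a i | i. i \<ge> 1}" by simp
  show "antichain_in all_perms {a i | i. i \<ge> 1}"
    unfolding antichain_in_def all_perms_def using is_perm_a not_contained_a by blast
qed

end
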